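(* Let $v\in\Delta$ be an equilibrium, i.e. $F(v)=0$. Then for $i,j\in\mathrm{supp}(v)$, $$D_{e_i-e_j}F(v)=(\alpha-1)(e_i-e_j)+\alpha\sum_{\ell}\frac{v_\ell^\alpha\big(A_{\ell,i}v_i^{\alpha-1}-A_{\ell,j}v_j^{\alpha-1}\big)}{H(v)}\,e_\ell,$$ and for $i\notin\mathrm{supp}(v)$, $$D_{e_i-v}F(v)=-(e_i-v).$$ Furthermore, all eigenvalues of $DF(v)$ are real.
   Context: Let $N\ge2$, $\alpha>1$, and let $A=(A_{i,j})_{i,j\le N}$ be a symmetric matrix with nonnegative entries, $A_{i,j}>0$ for $i\ne j$, and $\sum_j A_{i,j}$ independent of $i$. Let $(e_1,\dots,e_N)$ be the canonical basis of $\mathbb R^N$. Let $\Delta=\{v\in\mathbb R_+^N:\ \sum_i v_i=1,\ v_i\le 3/4 \text{ whenever } A_{i,i}=0\}$. For $v$ with nonnegative coordinates let $v^\alpha=(v_i^\alpha)_i$, $H(v)=\sum_{i,j}A_{i,j}v_i^\alpha v_j^\alpha$ and $\pi_i(v)=v_i^\alpha(Av^\alpha)_i/H(v)$; on $\Delta$ the vector field is $F(v)=-v+\pi(v)$, and $DF(v)$ (resp. $D_xF(v)$) denotes the differential (resp. directional derivative in direction $x$) at $v$ of the map $v\mapsto -v+\pi(v)$, viewed as a linear map of $T_0\Delta=\{x\in\mathbb R^N:\sum_ix_i=0\}$. $\mathrm{supp}(v)=\{i: v_i\neq0\}$. *)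

theory Defs
  imports "HOL-Analysis.Analysis"
begin

text \<open>Vectors in R^N are modelled as real^'n (N = CARD('n)); matrices as real^'n^'n.\<close>

definition vpow :: "real \<Rightarrow> real^'n \<Rightarrow> real^'n" where
  "vpow \<alpha> v = (\<chi> i. v$i powr \<alpha>)"

definition Hfun :: "real^'n^'n \<Rightarrow> real \<Rightarrow> real^'n \<Rightarrow> real" where
  "Hfun A \<alpha> v = (\<Sum>i\<in>UNIV. \<Sum>j\<in>UNIV. A$i$j * v$i powr \<alpha> * v$j powr \<alpha>)"

definition pimap :: "real^'n^'n \<Rightarrow> real \<Rightarrow> real^'n \<Rightarrow> real^'n" where
  "pimap A \<alpha> v = (\<chi> i. v$i powr \<alpha> * (A *v vpow \<alpha> v)$i / Hfun A \<alpha> v)"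

definition Fmap :: "real^'n^'n \<Rightarrow> real \<Rightarrow> real^'n \<Rightarrow> real^'n" where
  "Fmap A \<alpha> v = - v + pimap A \<alpha> v"

definition Simplex :: "real^'n^'n \<Rightarrow> (real^'n) set" where
  "Simplex A = {v. (\<forall>i. 0 \<le> v$i) \<and> (\<Sum>i\<in>UNIV. v$i) = 1 \<and> (\<forall>i. A$i$i = 0 \<longrightarrow> v$i \<le> 3/4)}"

definition supp :: "real^'n \<Rightarrow> 'n set" where
  "supp v = {i. v$i \<noteq> 0}"

definition T0 :: "(real^'n) set" where
  "T0 = {x. (\<Sum>i\<in>UNIV. x$i) = 0}"

text \<open>The nonnegative orthant, the natural domain of v -> v^alpha.\<close>
definition orthant :: "(real^'n) set" where
  "orthant = {x. \<forall>i. 0 \<le> x$i}"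

text \<open>lam is an eigenvalue of the linear map D viewed on the real subspace S,
  i.e. an eigenvalue of its complexification: there is a nonzero x + i y
  (x, y in S) with D(x + i y) = lam (x + i y).\<close>
definition eigenvalue_on :: "(real^'n \<Rightarrow> real^'n) \<Rightarrow> (real^'n) set \<Rightarrow> complex \<Rightarrow> bool" where
  "eigenvalue_on D S lam \<longleftrightarrow> (\<exists>x\<in>S. \<exists>y\<in>S. (x \<noteq> 0 \<or> y \<noteq> 0) \<and>
      D x = Re lam *\<^sub>R x - Im lam *\<^sub>R y \<and> D y = Im lam *\<^sub>R x + Re lam *\<^sub>R y)"

end

theory Submission
  imports Defs
begin

text \<open>Since \<alpha> > 1, t \<mapsto> t powr \<alpha> is differentiable from the right at 0, so F is
  differentiable relative to the nonnegative orthant; the orthant contains a segment in every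
  coordinate direction, so this derivative is unique. By the quotient rule and the equilibrium
  identity \<pi>(v) = v, which says v_k^(\<alpha>-1) (A v^\<alpha>)_k = H(v) on the support S of v, the derivative is
  DF(v) h = - h + \<alpha> 1_S h + (\<alpha>/H) v^\<alpha> A (v^(\<alpha>-1) h) - 2\<alpha> (1_S \<bullet> h) v
  with componentwise products of vectors, and both formulas are read off from it.
  Since v^\<alpha> / v = v^(\<alpha>-1) on S and A is symmetric, DF(v) is self-adjoint for the weighted inner
  product \<Sum> x_k y_k / v_k (weight 1 off S), so all its eigenvalues are real.\<close>

lemma has_real_derivative_powr_nonneg:
  fixes a z :: real
  assumes "a > 1" "z \<ge> 0"
  shows "((\<lambda>t. t powr a) has_real_derivative a * z powr (a - 1)) (at z within {0..})"
proof (cases "z = 0")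
  case True
  have "((\<lambda>t. t powr (a - 1)) \<longlongrightarrow> 0) (at 0 within {0..})"
    by (rule tendsto_zero_powrI) (use assms(1) in \<open>auto intro!: tendsto_eq_intros simp: eventually_at_filter\<close>)
  then have "((\<lambda>t. (t powr a - 0 powr a) / (t - 0)) \<longlongrightarrow> 0) (at 0 within {0..})"
  proof (rule Lim_transform_eventually)
    show "\<forall>\<^sub>F t in at 0 within {0..}. t powr (a - 1) = (t powr a - 0 powr a) / (t - 0)"
      unfolding eventually_at_filter by (auto simp: powr_diff)
  qed
  then show ?thesis
    using True assms(1) by (simp add: has_field_derivative_iff)
next
  case False
  with assms(2) have "z > 0" by simp
  then show ?thesis
    by (rule has_field_derivative_at_within[OF has_real_derivative_powr])
qed

lemma powr_eq_powr_minus_one_times: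
  fixes x :: real
  assumes "x \<ge> 0"
  shows "x powr a = x powr (a - 1) * x"
  using assms powr_add[of x "a - 1" 1] by (cases "x = 0") auto

lemma bounded_bilinear_vec_times: "bounded_bilinear ((*) :: real^'n \<Rightarrow> real^'n \<Rightarrow> real^'n)"
proof (rule bounded_bilinear.intro)
  have "norm (x * y) \<le> norm x * norm y * CARD('n)" for x y :: "real^'n"
  proof -
    have "norm (x * y) \<le> (\<Sum>i\<in>UNIV. \<bar>(x * y)$i\<bar>)" by (rule norm_le_l1_cart)
    also have "\<dots> \<le> (\<Sum>i::'n\<in>UNIV. norm x * norm y)"
      by (rule sum_mono) (auto simp: abs_mult intro!: mult_mono component_le_norm_cart)
    also have "\<dots> = norm x * norm y * CARD('n)" by simp
    finally show ?thesis .
  qed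
  then show "\<exists>K. \<forall>x y :: real^'n. norm (x * y) \<le> norm x * norm y * K"
    by (intro exI allI)
qed (rule distrib_right distrib_left mult_scaleR_left mult_scaleR_right)+

lemma inner_vec_times_left: "(x * y) \<bullet> z = x \<bullet> (y * z)" for x y z :: "real^'n"
  by (simp add: inner_vec_def mult.assoc)

lemma inner_matrix_vector_mult_commute:
  fixes A :: "real^'n^'n"
  assumes "transpose A = A"
  shows "x \<bullet> (A *v y) = y \<bullet> (A *v x)"
  by (metis assms dot_lmul_matrix inner_commute transpose_matrix_vector)

lemma eigenvalue_on_real_if_self_adjoint:
  fixes D :: "real^'n \<Rightarrow> real^'n"
  assumes "eigenvalue_on D S lam" "\<forall>k. w$k > 0" "\<And>x y. (w * y) \<bullet> D x = (w * x) \<bullet> D y"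
  shows "Im lam = 0"
proof -
  obtain x y where "x \<noteq> 0 \<or> y \<noteq> 0"
    and Dx: "D x = Re lam *\<^sub>R x - Im lam *\<^sub>R y" and Dy: "D y = Im lam *\<^sub>R x + Re lam *\<^sub>R y"
    using assms(1) by (auto simp: eigenvalue_on_def)
  have term_nonneg: "0 \<le> w$i * (z$i * z$i)" for i z
    using assms(2) by (simp add: less_imp_le)
  have q_nonneg: "(w * z) \<bullet> z \<ge> 0" for z
    unfolding inner_vec_def by (simp add: mult.assoc sum_nonneg term_nonneg)
  have q_pos: "(w * z) \<bullet> z > 0" if nz: "z \<noteq> 0" for z
  proof -
    obtain k where "z$k \<noteq> 0" using nz by (metis vec_eq_iff zero_index)
    then have "0 < w$k * (z$k * z$k)"
      using assms(2) by (metis mult_pos_pos not_real_square_gt_zero)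
    then show ?thesis
      unfolding inner_vec_def by (simp add: mult.assoc sum_pos2[of UNIV k] term_nonneg)
  qed
  have "(w * y) \<bullet> x = (w * x) \<bullet> y"
    by (simp add: inner_vec_def mult_ac)
  moreover have "(w * y) \<bullet> D x = (w * x) \<bullet> D y" by (rule assms(3))
  ultimately have "Im lam * ((w * x) \<bullet> x + (w * y) \<bullet> y) = 0"
    unfolding Dx Dy by (simp add: inner_diff_right inner_add_right algebra_simps)
  moreover have "(w * x) \<bullet> x + (w * y) \<bullet> y > 0"
    using \<open>x \<noteq> 0 \<or> y \<noteq> 0\<close> q_pos q_nonneg by (meson add_pos_nonneg add_nonneg_pos)
  ultimately show ?thesis
    by simp
qed

lemma has_derivative_within_orthant_unique:
  fixes f :: "real^'n \<Rightarrow> 'b::real_normed_vector"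
  assumes "v \<in> orthant"
    and "(f has_derivative D) (at v within orthant)" "(f has_derivative D') (at v within orthant)"
  shows "D = D'"
proof (rule frechet_derivative_unique_within[OF assms(2,3)])
  fix b :: "real^'n" and e :: real
  assume "b \<in> Basis" "e > 0"
  then obtain k where "b = axis k 1" by (auto simp: Basis_vec_def)
  then show "\<exists>d. 0 < \<bar>d\<bar> \<and> \<bar>d\<bar> < e \<and> v + d *\<^sub>R b \<in> orthant"
    using \<open>e > 0\<close> assms(1) by (intro exI[of _ "e/2"]) (auto simp: orthant_def axis_def)
qed

lemma vpow_eq_times: "v \<in> orthant \<Longrightarrow> vpow a v = vpow (a - 1) v * v"
  by (auto simp: vec_eq_iff vpow_def orthant_def intro!: powr_eq_powr_minus_one_times)

lemma has_derivative_vpow: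
  fixes v :: "real^'n"
  assumes "a > 1" "v \<in> orthant"
  shows "(vpow a has_derivative (\<lambda>h. a *\<^sub>R (vpow (a - 1) v * h))) (at v within orthant)"
proof (subst has_derivative_componentwise_within, intro ballI)
  fix b :: "real^'n" assume "b \<in> Basis"
  then obtain k where b: "b = axis k 1" by (auto simp: Basis_vec_def)
  have "((\<lambda>t. t powr a) has_derivative (*) (a * t powr (a - 1))) (at t within {0..})"
    if "t \<in> {0..}" for t
    using has_real_derivative_powr_nonneg[OF assms(1)] that by (simp add: has_field_derivative_def)
  moreover have "(\<lambda>x. x$k) ` orthant \<subseteq> {0..}" "v \<in> orthant"
    using assms(2) by (auto simp: orthant_def)
  moreover have "((\<lambda>x. x$k) has_derivative (\<lambda>h. h$k)) (at v within orthant)"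
    by (rule bounded_linear.has_derivative[OF bounded_linear_vec_nth has_derivative_ident])
  ultimately have "((\<lambda>x. x$k powr a) has_derivative (\<lambda>h. a * v$k powr (a - 1) * h$k)) (at v within orthant)"
    by (rule has_derivative_in_compose2)
  moreover have "(\<lambda>x. vpow a x \<bullet> b) = (\<lambda>x. x$k powr a)"
    and "(\<lambda>h. a *\<^sub>R (vpow (a - 1) v * h) \<bullet> b) = (\<lambda>h. a * v$k powr (a - 1) * h$k)"
    by (simp_all add: fun_eq_iff b inner_axis vpow_def)
  ultimately show "((\<lambda>x. vpow a x \<bullet> b) has_derivative (\<lambda>h. a *\<^sub>R (vpow (a - 1) v * h) \<bullet> b)) (at v within orthant)"
    by (simp only:)
qed

lemma Hfun_eq_inner: "Hfun A a x = vpow a x \<bullet> (A *v vpow a x)"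
  by (simp add: Hfun_def inner_vec_def matrix_vector_mult_def vpow_def sum_distrib_left mult_ac)

lemma Hfun_pos:
  fixes A :: "real^'n^'n"
  assumes "v \<in> Simplex A" "\<forall>i j. 0 \<le> A$i$j" "\<forall>i j. i \<noteq> j \<longrightarrow> 0 < A$i$j"
  shows "Hfun A a v > 0"
proof -
  have v_nonneg: "\<forall>i. 0 \<le> v$i" and v_sum: "(\<Sum>i\<in>UNIV. v$i) = 1"
    and v_bound: "\<forall>i. A$i$i = 0 \<longrightarrow> v$i \<le> 3/4"
    using assms(1) by (auto simp: Simplex_def)
  obtain i where i: "v$i > 0"
    using v_sum v_nonneg by (metis less_eq_real_def sum.neutral zero_neq_one)
  have "\<exists>j. v$j > 0 \<and> A$i$j > 0"
  proof (cases "A$i$i = 0")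
    case True
    with v_bound have "v$i \<le> 3/4" by simp
    have "\<exists>j. j \<noteq> i \<and> v$j \<noteq> 0"
    proof (rule ccontr)
      assume "\<not> ?thesis"
      then have "(\<Sum>k\<in>UNIV. v$k) = v$i"
        by (subst sum.remove[of UNIV i]) (auto intro!: sum.neutral)
      then show False using v_sum \<open>v$i \<le> 3/4\<close> by simp
    qed
    then show ?thesis
      using v_nonneg assms(3) by (metis less_eq_real_def)
  next
    case False
    then show ?thesis using i assms(2) by (metis less_eq_real_def)
  qed
  then obtain j where j: "v$j > 0" "A$i$j > 0" by blast
  have terms_nonneg: "0 \<le> A$k$l * v$k powr a * v$l powr a" for k l
    using assms(2) by simp
  have "0 < A$i$j * v$i powr a * v$j powr a"
    using i j by simp
  then have "0 < (\<Sum>l\<in>UNIV. A$i$l * v$i powr a * v$l powr a)"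
    using sum_pos2[of UNIV j "\<lambda>l. A$i$l * v$i powr a * v$l powr a"] terms_nonneg by simp
  then show ?thesis
    unfolding Hfun_def
    using sum_pos2[of UNIV i "\<lambda>k. \<Sum>l\<in>UNIV. A$k$l * v$k powr a * v$l powr a"] terms_nonneg
    by (simp add: sum_nonneg)
qed

lemma pimap_eq_scaleR: "pimap A a x = inverse (Hfun A a x) *\<^sub>R (vpow a x * (A *v vpow a x))"
  by (simp add: pimap_def vec_eq_iff vpow_def field_simps)

definition Fmap_deriv :: "real^'n^'n \<Rightarrow> real \<Rightarrow> real^'n \<Rightarrow> real^'n \<Rightarrow> real^'n" where
  "Fmap_deriv A a v h =
    (let P = vpow a v; dP = a *\<^sub>R (vpow (a - 1) v * h); H = Hfun A a v
     in - h + inverse H *\<^sub>R (P * (A *v dP) + dP * (A *v P))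
          - ((P \<bullet> (A *v dP) + dP \<bullet> (A *v P)) / H\<^sup>2) *\<^sub>R (P * (A *v P)))"

lemma has_derivative_Fmap:
  fixes A :: "real^'n^'n" and v :: "real^'n"
  assumes "a > 1" "v \<in> orthant" "Hfun A a v \<noteq> 0"
  shows "(Fmap A a has_derivative Fmap_deriv A a v) (at v within orthant)"
proof -
  define dP where "dP h = a *\<^sub>R (vpow (a - 1) v * h)" for h :: "real^'n"
  have P: "(vpow a has_derivative dP) (at v within orthant)"
    unfolding dP_def by (rule has_derivative_vpow[OF assms(1,2)])
  have Q: "((\<lambda>x. A *v vpow a x) has_derivative (\<lambda>h. A *v dP h)) (at v within orthant)"
    by (rule bounded_linear.has_derivative[OF matrix_vector_mul_bounded_linear P])
  have PQ: "((\<lambda>x. vpow a x * (A *v vpow a x)) has_derivative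
      (\<lambda>h. vpow a v * (A *v dP h) + dP h * (A *v vpow a v))) (at v within orthant)"
    by (rule bounded_bilinear.FDERIV[OF bounded_bilinear_vec_times P Q])
  have H: "(Hfun A a has_derivative
      (\<lambda>h. vpow a v \<bullet> (A *v dP h) + dP h \<bullet> (A *v vpow a v))) (at v within orthant)"
    unfolding Hfun_eq_inner[abs_def] by (rule has_derivative_inner[OF P Q])
  have Fmap_eq: "Fmap A a = (\<lambda>x. - x + inverse (Hfun A a x) *\<^sub>R (vpow a x * (A *v vpow a x)))"
    by (simp add: fun_eq_iff Fmap_def pimap_eq_scaleR)
  show ?thesis
    unfolding Fmap_eq
    by (rule has_derivative_eq_rhs,
        (rule derivative_intros H PQ Deriv.has_derivative_inverse[OF assms(3) H])+)
       (use assms(3) in \<open>simp add: fun_eq_iff Fmap_deriv_def Let_def dP_def power2_eq_square field_simps\<close>)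
qed

definition supp_indicator :: "real^'n \<Rightarrow> real^'n" where
  "supp_indicator v = (\<chi> k. if v$k = 0 then 0 else 1)"

lemma supp_indicator_nth [simp]: "supp_indicator v $ k = (if v$k = 0 then 0 else 1)"
  by (simp add: supp_indicator_def)

lemma inner_supp_indicator_self: "supp_indicator v \<bullet> v = (\<Sum>k\<in>UNIV. v$k)"
  by (auto simp: inner_vec_def intro: sum.cong)

lemma equilibrium_vpow_times:
  assumes "pimap A a v = v" "Hfun A a v \<noteq> 0"
  shows "vpow a v * (A *v vpow a v) = Hfun A a v *\<^sub>R v"
  using assms by (metis pimap_eq_scaleR scaleR_scaleR right_inverse scaleR_one)

lemma equilibrium_vpow_minus_one_times:
  assumes "v \<in> orthant" "pimap A a v = v" "Hfun A a v \<noteq> 0"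
  shows "vpow (a - 1) v * (A *v vpow a v) = Hfun A a v *\<^sub>R supp_indicator v"
proof (rule vec_eq_iff[THEN iffD2], rule allI)
  fix k
  have "vpow (a - 1) v $ k * (A *v vpow a v) $ k * v$k = Hfun A a v * v$k"
    using arg_cong[OF equilibrium_vpow_times[OF assms(2,3)], of "\<lambda>x. x$k"] vpow_eq_times[OF assms(1), of a]
    by (simp add: mult_ac)
  then show "(vpow (a - 1) v * (A *v vpow a v)) $ k = (Hfun A a v *\<^sub>R supp_indicator v) $ k"
    by (auto simp: supp_indicator_def vpow_def)
qed

lemma Fmap_deriv_at_equilibrium:
  fixes A :: "real^'n^'n"
  assumes "transpose A = A" "v \<in> orthant" "pimap A a v = v" "Hfun A a v \<noteq> 0"
  shows "Fmap_deriv A a v h = - h + a *\<^sub>R (supp_indicator v * h)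
      + (a / Hfun A a v) *\<^sub>R (vpow a v * (A *v (vpow (a - 1) v * h)))
      - (2 * a * (supp_indicator v \<bullet> h)) *\<^sub>R v"
proof -
  define H where "H = Hfun A a v"
  define c where "c = vpow (a - 1) v"
  define dP where "dP = a *\<^sub>R (c * h)"
  have cQ: "c * (A *v vpow a v) = H *\<^sub>R supp_indicator v"
    unfolding c_def H_def by (rule equilibrium_vpow_minus_one_times[OF assms(2-4)])
  have "dP * (A *v vpow a v) = a *\<^sub>R ((c * (A *v vpow a v)) * h)"
    by (simp add: dP_def mult_ac)
  also have "\<dots> = (a * H) *\<^sub>R (supp_indicator v * h)"
    by (simp add: cQ)
  finally have "dP * (A *v vpow a v) = (a * H) *\<^sub>R (supp_indicator v * h)" .
  moreover have "dP \<bullet> (A *v vpow a v) = a * H * (supp_indicator v \<bullet> h)"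
    by (simp add: dP_def mult.commute[of c h] inner_vec_times_left cQ inner_commute)
  moreover have "vpow a v \<bullet> (A *v dP) = dP \<bullet> (A *v vpow a v)"
    by (rule inner_matrix_vector_mult_commute[OF assms(1)])
  moreover have "vpow a v * (A *v dP) = a *\<^sub>R (vpow a v * (A *v (c * h)))"
    by (simp add: dP_def matrix_vector_mult_scaleR)
  moreover have "vpow a v * (A *v vpow a v) = H *\<^sub>R v"
    unfolding H_def by (rule equilibrium_vpow_times[OF assms(3,4)])
  ultimately show ?thesis
    using assms(4)
    by (simp add: Fmap_deriv_def Let_def H_def[symmetric] c_def[symmetric] dP_def[symmetric]
        scaleR_add_right matrix_vector_mult_scaleR power2_eq_square field_simps)
qed

lemma sum_scaleR_axis: "(\<Sum>l\<in>UNIV. f l *\<^sub>R axis l 1) = (\<chi> l. f l)"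
  for f :: "'n::finite \<Rightarrow> real"
  by (simp add: vec_eq_iff axis_def if_distrib sum.If_cases)

lemma Fmap_deriv_axis_diff:
  fixes A :: "real^'n^'n"
  assumes "transpose A = A" "v \<in> orthant" "pimap A a v = v" "Hfun A a v \<noteq> 0"
    and "i \<in> supp v" "j \<in> supp v"
  shows "Fmap_deriv A a v (axis i 1 - axis j 1) =
    (a - 1) *\<^sub>R (axis i 1 - axis j 1)
    + a *\<^sub>R (\<Sum>l\<in>UNIV. ((v$l powr a * (A$l$i * v$i powr (a - 1) - A$l$j * v$j powr (a - 1)))
                        / Hfun A a v) *\<^sub>R axis l 1)"
proof -
  define h :: "real^'n" where "h = axis i 1 - axis j 1"
  have "supp_indicator v * h = h"
    using assms(5,6) by (auto simp: h_def supp_def vec_eq_iff axis_def)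
  moreover have "supp_indicator v \<bullet> h = 0"
    using assms(5,6) by (simp add: h_def supp_def inner_axis inner_diff_right)
  ultimately have D: "Fmap_deriv A a v h
      = (a - 1) *\<^sub>R h + a *\<^sub>R (inverse (Hfun A a v) *\<^sub>R (vpow a v * (A *v (vpow (a - 1) v * h))))"
    using assms(1-4) by (simp add: Fmap_deriv_at_equilibrium divide_inverse algebra_simps)
  have ch: "vpow (a - 1) v * h = v$i powr (a - 1) *\<^sub>R axis i 1 - v$j powr (a - 1) *\<^sub>R axis j 1"
    by (simp add: h_def vec_eq_iff vpow_def axis_def)
  have X: "inverse (Hfun A a v) *\<^sub>R (vpow a v * (A *v (vpow (a - 1) v * h))) =
      (\<Sum>l\<in>UNIV. ((v$l powr a * (A$l$i * v$i powr (a - 1) - A$l$j * v$j powr (a - 1)))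
                  / Hfun A a v) *\<^sub>R axis l 1)"
    unfolding ch
    by (simp add: sum_scaleR_axis vec_eq_iff matrix_vector_mult_diff_distrib
        matrix_vector_mult_scaleR matrix_vector_mult_basis column_def vpow_def divide_inverse mult_ac)
  show ?thesis
    by (simp only: h_def[symmetric] D X)
qed

lemma Fmap_deriv_off_supp:
  fixes A :: "real^'n^'n"
  assumes "transpose A = A" "v \<in> orthant" "pimap A a v = v" "Hfun A a v \<noteq> 0"
    and "(\<Sum>k\<in>UNIV. v$k) = 1" "i \<notin> supp v"
  shows "Fmap_deriv A a v (axis i 1 - v) = - (axis i 1 - v)"
proof -
  define h :: "real^'n" where "h = axis i 1 - v"
  have vi: "v$i = 0" using assms(6) by (simp add: supp_def)
  have "supp_indicator v * h = - v"
    using vi by (auto simp: h_def vec_eq_iff axis_def)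
  moreover have "supp_indicator v \<bullet> h = - 1"
    using vi assms(5) by (simp add: h_def inner_axis inner_diff_right inner_supp_indicator_self)
  moreover have "vpow (a - 1) v * h = - vpow a v"
    using vi vpow_eq_times[OF assms(2), of a] by (simp add: h_def vec_eq_iff vpow_def axis_def)
  moreover have "A *v (- vpow a v) = - (A *v vpow a v)"
    using matrix_vector_mult_diff_distrib[of A 0 "vpow a v"] by simp
  moreover have "vpow a v * (A *v vpow a v) = Hfun A a v *\<^sub>R v"
    by (rule equilibrium_vpow_times[OF assms(3,4)])
  ultimately show ?thesis
    using assms(1-4) by (simp add: Fmap_deriv_at_equilibrium h_def[symmetric]) (simp add: vec_eq_iff)
qed

lemma Fmap_deriv_self_adjoint:
  fixes A :: "real^'n^'n"
  assumes "transpose A = A" "v \<in> orthant" "pimap A a v = v" "Hfun A a v \<noteq> 0"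
  defines "w \<equiv> \<chi> k. if v$k = 0 then 1 else inverse (v$k)"
  shows "(w * y) \<bullet> Fmap_deriv A a v x = (w * x) \<bullet> Fmap_deriv A a v y"
proof -
  define c where "c = vpow (a - 1) v"
  have wv: "w * v = supp_indicator v"
    by (simp add: w_def vec_eq_iff)
  have wP: "w * vpow a v = c"
    using vpow_eq_times[OF assms(2), of a] by (auto simp: w_def c_def vec_eq_iff vpow_def)
  have "(w * y) \<bullet> Fmap_deriv A a v x = - ((w * y) \<bullet> x) + a * ((w * y) \<bullet> (supp_indicator v * x))
      + (a / Hfun A a v) * ((c * y) \<bullet> (A *v (c * x)))
      - 2 * a * (supp_indicator v \<bullet> x) * (supp_indicator v \<bullet> y)" for x y
  proof -
    have "(w * y) \<bullet> (vpow a v * z) = ((w * vpow a v) * y) \<bullet> z" for z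
      by (simp add: inner_vec_def mult_ac)
    moreover have "(w * y) \<bullet> v = (w * v) \<bullet> y"
      by (simp add: inner_vec_def mult_ac)
    ultimately show ?thesis
      using assms(1-4)
      by (simp add: Fmap_deriv_at_equilibrium c_def wP wv inner_diff_right inner_add_right inner_commute)
  qed
  moreover have "(w * y) \<bullet> x = (w * x) \<bullet> y" "(w * y) \<bullet> (supp_indicator v * x) = (w * x) \<bullet> (supp_indicator v * y)"
    by (simp_all add: inner_vec_def mult_ac)
  moreover have "(c * y) \<bullet> (A *v (c * x)) = (c * x) \<bullet> (A *v (c * y))"
    by (rule inner_matrix_vector_mult_commute[OF assms(1)])
  ultimately show ?thesis
    by simp
qed

lemma Fmap_deriv_eigenvalue_real:
  fixes A :: "real^'n^'n"
  assumes "transpose A = A" "v \<in> orthant" "pimap A a v = v" "Hfun A a v \<noteq> 0"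
    and "eigenvalue_on (Fmap_deriv A a v) S lam"
  shows "Im lam = 0"
proof (rule eigenvalue_on_real_if_self_adjoint[OF assms(5)])
  show "\<forall>k. (\<chi> k. if v$k = 0 then 1 else inverse (v$k)) $ k > 0"
    using assms(2) by (auto simp: orthant_def less_le)
qed (rule Fmap_deriv_self_adjoint[OF assms(1-4)])

theorem lemma3p7:
  fixes A :: "real^'n^'n" and \<alpha> :: real and v :: "real^'n"
  assumes "CARD('n) \<ge> 2"
    and "\<alpha> > 1"
    and "\<forall>i j. A$i$j = A$j$i"
    and "\<forall>i j. 0 \<le> A$i$j"
    and "\<forall>i j. i \<noteq> j \<longrightarrow> A$i$j > 0"
    and "\<exists>c. \<forall>i. (\<Sum>j\<in>UNIV. A$i$j) = c"
    and "v \<in> Simplex A"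
    and "Fmap A \<alpha> v = 0"
  shows "(\<exists>D. (Fmap A \<alpha> has_derivative D) (at v within orthant)) \<and>
    (\<forall>D. (Fmap A \<alpha> has_derivative D) (at v within orthant) \<longrightarrow>
       (\<forall>i\<in>supp v. \<forall>j\<in>supp v.
          D (axis i 1 - axis j 1) =
            (\<alpha> - 1) *\<^sub>R (axis i 1 - axis j 1)
            + \<alpha> *\<^sub>R (\<Sum>l\<in>UNIV. ((v$l powr \<alpha> * (A$l$i * v$i powr (\<alpha> - 1) - A$l$j * v$j powr (\<alpha> - 1)))
                                / Hfun A \<alpha> v) *\<^sub>R axis l 1)) \<and>
       (\<forall>i. i \<notin> supp v \<longrightarrow> D (axis i 1 - v) = - (axis i 1 - v)) \<and>
       (\<forall>lam. eigenvalue_on D T0 lam \<longrightarrow> Im lam = 0))"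
proof -
  have sym: "transpose A = A"
    using assms(3) by (simp add: transpose_def vec_eq_iff)
  have v: "v \<in> orthant" "(\<Sum>k\<in>UNIV. v$k) = 1"
    using assms(7) by (auto simp: Simplex_def orthant_def)
  have H: "Hfun A \<alpha> v \<noteq> 0"
    using Hfun_pos[OF assms(7,4,5), of \<alpha>] by simp
  have eq: "pimap A \<alpha> v = v"
    using assms(8) by (simp add: Fmap_def add_eq_0_iff)
  have dF: "(Fmap A \<alpha> has_derivative Fmap_deriv A \<alpha> v) (at v within orthant)"
    by (rule has_derivative_Fmap[OF assms(2) v(1) H])
  moreover have "D = Fmap_deriv A \<alpha> v" if "(Fmap A \<alpha> has_derivative D) (at v within orthant)" for D
    by (rule has_derivative_within_orthant_unique[OF v(1) that dF])
  ultimately show ?thesis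
    using Fmap_deriv_axis_diff[OF sym v(1) eq H] Fmap_deriv_off_supp[OF sym v(1) eq H v(2)]
      Fmap_deriv_eigenvalue_real[OF sym v(1) eq H]
    by blast
qed

end
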